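(* Let $z\in I^+$, $X\subseteq N$, and suppose $\varphi(\overline z^X)=(B,Y,M,A,X)$ (in particular $\varphi(\overline z^X)\ne\mathbf 0$). Then for all $C\in X$ and $D\in Y$ the following are equivalent: (i) $C\,\mathcal R_X\,A$ and $B\,\mathcal R_Y\,D$; (ii) there exist sentential forms $u,v$ of $\overline{\mathcal G}$ such that $(C,X)\Rightarrow^*_{\overline{\mathcal G}}u\,(D,Y)[\overline z^X]\,v$.
   Context: Let $\mathcal{G}=(N,T,I,P,S)$ be an indexed grammar: $N$ (non-terminals), $T$ (terminals), $I$ (stack symbols) finite pairwise disjoint alphabets, $S\in N$, and productions of the forms $A\to w$ ($w\in T^*$), $A\to BC$, $A\to Bf$, $Af\to B$ ($A,B,C\in N$, $f\in I$). Terms $A[z]$ ($A\in N$, $z\in I^*$ the stack, top on the left; $A$ means $A[\varepsilon]$); sentential forms are words over terms and terminals; derivation: $uA[z]v\Rightarrow uB[z]C[z]v$ if $A\to BC\in P$; $uA[z]v\Rightarrow uB[fz]v$ if $A\to Bf\in P$; $uA[fz]v\Rightarrow uB[z]v$ if $Af\to B\in P$; $uA[z]v\Rightarrow uwv$ if $A\to w\in P$, $w\in T^*$; $\Rightarrow^*$ is the reflexive transitive closure. For $X\subseteq N$, $z\in I^*$: $z\cdot X=\{A\in N:\exists u\in(X\cup T)^*, A[z]\Rightarrow^*u\}$ (non-terminals in $u$ with empty stack); $\mathrm{Useful}=\{A:\exists w\in T^*, A\Rightarrow^*w\}$; assume $S\in\mathrm{Useful}$. The annotated version $\overline{\mathcal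 G}$ has non-terminals $\overline N=\{(A,X)\in N\times2^N:A\in X\}$, stack symbols $\overline I=I\times 2^N$, start $(S,\mathrm{Useful})$, and productions: $(A,X)\to w$ for $A\to w\in P$, $A\in X$; $(A,X)\to(B,X)(C,X)$ for $A\to BC\in P$, $A,B,C\in X$; $(A,X)\to(B,Y)(f,X)$ for $A\to Bf\in P$ with $Y=f\cdot X$, $A\in X$, $B\in Y$; $(A,Y)(f,X)\to(B,X)$ for $Af\to B\in P$ with $Y=f\cdot X$, $A\in Y$, $B\in X$. For $z=f_n\cdots f_1\in I^*$, $\overline z^X=(f_n,X_n)\cdots(f_1,X_1)$ with $X_1=X$, $X_{i+1}=f_i\cdot X_i$. Assume every $f\in I$ occurs in some production $A\to Bf$ and there are functions $\alpha,\beta:I\to N$ such that every production $A\to Bf$ in $P$ satisfies $A=\alpha(f)$, $B=\beta(f)$. For $X\subseteq N$, $A\,\mathcal R_X\,B$ holds iff $A,B\in X$ and $(A,X)\Rightarrow^*_{\overline{\mathcal G}}u\,(B,X)\,v$ for some sentential forms $u,v$ of $\overline{\mathcal G}$ (with $(B,X)$ having empty stack). The stack monoid $\mathbb M$ has elements: all tuples $(B,Y,M,A,X)$ with $A,B\in N$, $X,Y\subseteq N$, $M\in\mathbb B^{N\times N}$ (Boolean matrices, product over $(\vee,\wedge)$), plus a neutral element $\mathbf 1$ and an absorbing element $\mathbf 0$; product $(B_2,Y_2,M_2,A_2,X_2)\cdot(B_1,Y_1,M_1,A_1,X_1)=(B_2,Y_2,M_1M_2,A_1,X_1)$ if $X_2=Y_1$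 and $B_1\,\mathcal R_{X_2}\,A_2$, and $\mathbf 0$ otherwise. $\varphi:\overline I^*\to\mathbb M$ is the monoid morphism with $\varphi(f,X)=(\beta(f),f\cdot X,M_{f,X},\alpha(f),X)$, where $M_{f,X}(A,B)=\top$ iff $A[f]\Rightarrow^*_{\mathcal G}uBv$ for some $u,v\in(X\cup T)^*$. *)

theory Defs
  imports Main
begin

text \<open>Indexed grammars. Non-terminals, terminals and stack symbols are the (finite,
pairwise disjoint) types 'n, 't, 'i; the sets N, T, I are their universes.\<close>

datatype ('n, 't, 'i) prod =
    TermP 'n "'t list"
  | BranchP 'n 'n 'n
  | PushP 'n 'n 'i
  | PopP 'n 'i 'n

text \<open>Symbols of sentential forms: terminals or terms A[z] (stack z, top at the head).\<close>
datatype ('n, 't, 'i) sym = Tm 't | Nt 'n "'i list"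

inductive step :: "('n,'t,'i) prod set \<Rightarrow> ('n,'t,'i) sym list \<Rightarrow> ('n,'t,'i) sym list \<Rightarrow> bool"
  for P where
  branch: "BranchP A B C \<in> P \<Longrightarrow> step P (l @ [Nt A z] @ r) (l @ [Nt B z, Nt C z] @ r)"
| push: "PushP A B f \<in> P \<Longrightarrow> step P (l @ [Nt A z] @ r) (l @ [Nt B (f # z)] @ r)"
| pop: "PopP A f B \<in> P \<Longrightarrow> step P (l @ [Nt A (f # z)] @ r) (l @ [Nt B z] @ r)"
| termin: "TermP A w \<in> P \<Longrightarrow> step P (l @ [Nt A z] @ r) (l @ map Tm w @ r)"

definition derives :: "('n,'t,'i) prod set \<Rightarrow> ('n,'t,'i) sym list \<Rightarrow> ('n,'t,'i) sym list \<Rightarrow> bool" where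
  "derives P = (step P)\<^sup>*\<^sup>*"

definition over :: "'n set \<Rightarrow> ('n,'t,'i) sym list \<Rightarrow> bool" where
  "over X u \<longleftrightarrow> (\<forall>s\<in>set u. (\<exists>a. s = Tm a) \<or> (\<exists>B\<in>X. s = Nt B []))"

definition dot :: "('n,'t,'i) prod set \<Rightarrow> 'i list \<Rightarrow> 'n set \<Rightarrow> 'n set" where
  "dot P z X = {A. \<exists>u. over X u \<and> derives P [Nt A z] u}"

definition Useful :: "('n,'t,'i) prod set \<Rightarrow> 'n set" where
  "Useful P = {A. \<exists>w. derives P [Nt A []] (map Tm w)}"

definition ann :: "('n,'t,'i) prod set \<Rightarrow> ('n \<times> 'n set, 't, 'i \<times> 'n set) prod set" where
  "ann P =
     {TermP (A, X) w | A X w. TermP A w \<in> P \<and> A \<in> X}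
   \<union> {BranchP (A, X) (B, X) (C, X) | A B C X. BranchP A B C \<in> P \<and> A \<in> X \<and> B \<in> X \<and> C \<in> X}
   \<union> {PushP (A, X) (B, dot P [f] X) (f, X) | A B f X.
        PushP A B f \<in> P \<and> A \<in> X \<and> B \<in> dot P [f] X}
   \<union> {PopP (A, dot P [f] X) (f, X) (B, X) | A B f X.
        PopP A f B \<in> P \<and> A \<in> dot P [f] X \<and> B \<in> X}"

text \<open>Annotated stack: for z = f_n ... f_1, overline z^X = (f_n,X_n)...(f_1,X_1), with
  X_1 = X, X_{i+1} = f_i \<cdot> X_i.\<close>
fun ann_rev :: "('n,'t,'i) prod set \<Rightarrow> 'i list \<Rightarrow> 'n set \<Rightarrow> ('i \<times> 'n set) list" where
  "ann_rev P [] X = []"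
| "ann_rev P (f # fs) X = (f, X) # ann_rev P fs (dot P [f] X)"

definition ann_stack :: "('n,'t,'i) prod set \<Rightarrow> 'i list \<Rightarrow> 'n set \<Rightarrow> ('i \<times> 'n set) list" where
  "ann_stack P z X = rev (ann_rev P (rev z) X)"

definition RX :: "('n,'t,'i) prod set \<Rightarrow> 'n set \<Rightarrow> 'n \<Rightarrow> 'n \<Rightarrow> bool" where
  "RX P X A B \<longleftrightarrow> A \<in> X \<and> B \<in> X \<and>
     (\<exists>u v. derives (ann P) [Nt (A, X) []] (u @ [Nt (B, X) []] @ v))"

datatype 'n mon = One | Zero | Elem 'n "'n set" "'n \<Rightarrow> 'n \<Rightarrow> bool" 'n "'n set"

definition bmult :: "('n \<Rightarrow> 'n \<Rightarrow> bool) \<Rightarrow> ('n \<Rightarrow> 'n \<Rightarrow> bool) \<Rightarrow> ('n \<Rightarrow> 'n \<Rightarrow> bool)" where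
  "bmult M1 M2 = (\<lambda>A C. \<exists>B. M1 A B \<and> M2 B C)"

fun mmult :: "('n,'t,'i) prod set \<Rightarrow> 'n mon \<Rightarrow> 'n mon \<Rightarrow> 'n mon" where
  "mmult P One e = e"
| "mmult P e One = e"
| "mmult P Zero e = Zero"
| "mmult P e Zero = Zero"
| "mmult P (Elem B2 Y2 M2 A2 X2) (Elem B1 Y1 M1 A1 X1) =
     (if X2 = Y1 \<and> RX P X2 B1 A2 then Elem B2 Y2 (bmult M1 M2) A1 X1 else Zero)"

definition Mfx :: "('n,'t,'i) prod set \<Rightarrow> 'i \<Rightarrow> 'n set \<Rightarrow> 'n \<Rightarrow> 'n \<Rightarrow> bool" where
  "Mfx P f X A B \<longleftrightarrow> (\<exists>u v. over X u \<and> over X v \<and> derives P [Nt A [f]] (u @ [Nt B []] @ v))"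

definition phi_letter :: "('n,'t,'i) prod set \<Rightarrow> ('i \<Rightarrow> 'n) \<Rightarrow> ('i \<Rightarrow> 'n) \<Rightarrow> 'i \<times> 'n set \<Rightarrow> 'n mon" where
  "phi_letter P \<alpha> \<beta> fX = (case fX of (f, X) \<Rightarrow> Elem (\<beta> f) (dot P [f] X) (Mfx P f X) (\<alpha> f) X)"

definition phi :: "('n,'t,'i) prod set \<Rightarrow> ('i \<Rightarrow> 'n) \<Rightarrow> ('i \<Rightarrow> 'n) \<Rightarrow> ('i \<times> 'n set) list \<Rightarrow> 'n mon" where
  "phi P \<alpha> \<beta> w = foldr (\<lambda>a e. mmult P (phi_letter P \<alpha> \<beta> a) e) w One"

end

theory Submission
  imports Defs
begin

(* A term B[z'] occurs in a sentential form derived from A[z] iff it is reached from A[z]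
   along edges of derivation trees (the relation child).

   (i) => (ii): phi(zbar^X) being nonzero says that consecutive letters of zbar^X are linked
   by the relations R, and the letters of z are pushed by alpha/beta.  Chaining these pushes
   with the R-derivations leads from (A,X)[] to (B,Y)[zbar^X].

   (ii) => (i): every symbol on the stack of a descendant of (C,X)[] was pushed by an ancestor
   and stays on the stack below it.  The bottom letter (last z, X) was pushed by a descendant
   (alpha (last z), X)[] = (A,X)[] of (C,X)[].  The top letter was pushed onto
   (beta (hd z), Y) = (B,Y), and on the way to (D,Y) it is never popped, so removing it from
   all stacks leaves an R_Y derivation from B to D. *)

inductive child :: "('n,'t,'i) prod set \<Rightarrow> 'n \<times> 'i list \<Rightarrow> 'n \<times> 'i list \<Rightarrow> bool"
  for P where
  branch_left: "BranchP A B C \<in> P \<Longrightarrow> child P (A, z) (B, z)"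
| branch_right: "BranchP A B C \<in> P \<Longrightarrow> child P (A, z) (C, z)"
| push: "PushP A B f \<in> P \<Longrightarrow> child P (A, z) (B, f # z)"
| pop: "PopP A f B \<in> P \<Longrightarrow> child P (A, f # z) (B, z)"

lemma step_append_context:
  assumes "step P x y" shows "step P (l @ x @ r) (l @ y @ r)"
  using assms
proof cases
  case (branch A B C l' z r')
  then show ?thesis using step.branch[of A B C P "l @ l'" z "r' @ r"] by simp
next
  case (push A B f l' z r')
  then show ?thesis using step.push[of A B f P "l @ l'" z "r' @ r"] by simp
next
  case (pop A f B l' z r')
  then show ?thesis using step.pop[of A f B P "l @ l'" z "r' @ r"] by simp
next
  case (termin A w l' z r')
  then show ?thesis using step.termin[of A w P "l @ l'" z "r' @ r"] by simp
qed

lemma derives_append_context: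
  assumes "derives P x y" shows "derives P (l @ x @ r) (l @ y @ r)"
  using assms unfolding derives_def
  by (induction rule: rtranclp_induct) (auto intro: rtranclp.rtrancl_into_rtrancl step_append_context)

lemma step_occurrence:
  assumes "step P y y'" and "Nt B z' \<in> set y'"
  shows "Nt B z' \<in> set y \<or> (\<exists>A z. Nt A z \<in> set y \<and> child P (A, z) (B, z'))"
  using assms by cases (auto intro: child.intros)

lemma derives_occurrence:
  assumes "derives P x y" and "Nt B z' \<in> set y"
  shows "\<exists>A z. Nt A z \<in> set x \<and> (child P)\<^sup>*\<^sup>* (A, z) (B, z')"
  using assms unfolding derives_def
proof (induction arbitrary: B z' rule: rtranclp_induct)
  case (step y y')
  from step_occurrence[OF step.hyps(2) step.prems] show ?case
    by (metis rtranclp.rtrancl_into_rtrancl step.IH)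
qed blast

lemma child_step:
  assumes "child P (A, z) (B, z')" shows "\<exists>u v. step P [Nt A z] (u @ [Nt B z'] @ v)"
  using assms
proof cases
  case (branch_left C)
  then have "step P [Nt A z] ([] @ [Nt B z'] @ [Nt C z])"
    using step.branch[of A B C P "[]" z "[]"] by simp
  then show ?thesis by blast
next
  case (branch_right C)
  then have "step P [Nt A z] ([Nt C z] @ [Nt B z'] @ [])"
    using step.branch[of A C B P "[]" z "[]"] by simp
  then show ?thesis by blast
next
  case (push f)
  then have "step P [Nt A z] ([] @ [Nt B z'] @ [])"
    using step.push[of A B f P "[]" z "[]"] by simp
  then show ?thesis by blast
next
  case (pop f)
  then have "step P [Nt A z] ([] @ [Nt B z'] @ [])"
    using step.pop[of A f B P "[]" z' "[]"] by simp
  then show ?thesis by blast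
qed

lemma derives_term_iff_descendant:
  "(\<exists>u v. derives P [Nt A z] (u @ [Nt B z'] @ v)) \<longleftrightarrow> (child P)\<^sup>*\<^sup>* (A, z) (B, z')"
proof
  assume "\<exists>u v. derives P [Nt A z] (u @ [Nt B z'] @ v)"
  then obtain u v where "derives P [Nt A z] (u @ [Nt B z'] @ v)" by blast
  from derives_occurrence[OF this, of B z'] show "(child P)\<^sup>*\<^sup>* (A, z) (B, z')" by simp
next
  assume "(child P)\<^sup>*\<^sup>* (A, z) (B, z')"
  then show "\<exists>u v. derives P [Nt A z] (u @ [Nt B z'] @ v)"
  proof (induction rule: rtranclp_induct2)
    case refl
    have "derives P [Nt A z] ([] @ [Nt A z] @ [])" by (simp add: derives_def)
    then show ?case by blast
  next
    case (step C y D y')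
    obtain u v where "derives P [Nt A z] (u @ [Nt C y] @ v)" using step.IH by blast
    moreover obtain u' v' where "step P [Nt C y] (u' @ [Nt D y'] @ v')"
      using child_step[OF step.hyps(2)] by blast
    then have "derives P (u @ [Nt C y] @ v) (u @ (u' @ [Nt D y'] @ v') @ v)"
      by (intro derives_append_context) (simp add: derives_def)
    ultimately have "derives P [Nt A z] ((u @ u') @ [Nt D y'] @ (v' @ v))"
      unfolding derives_def by simp
    then show ?case by blast
  qed
qed

lemma child_append_stack_iff:
  "child P (A, z @ s) (B, z' @ s) \<longleftrightarrow> child P (A, z) (B, z')"
proof
  assume "child P (A, z @ s) (B, z' @ s)"
  then show "child P (A, z) (B, z')"
  proof cases
    case (pop f)
    then have "z = f # z'" by (cases z) (auto dest: arg_cong[of _ _ length])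
    then show ?thesis using pop by (auto intro: child.intros)
  qed (auto intro: child.intros)
qed (cases rule: child.cases, auto intro: child.intros)

lemma rtranclp_child_append_stack:
  assumes "(child P)\<^sup>*\<^sup>* (A, z) (B, z')" shows "(child P)\<^sup>*\<^sup>* (A, z @ s) (B, z' @ s)"
  using assms
  by (induction rule: rtranclp_induct2)
    (auto intro: rtranclp.rtrancl_into_rtrancl simp: child_append_stack_iff)

lemma child_onto_stack:
  assumes "child P (A, z) (B, w @ g # s)"
  shows "w = [] \<and> z = s \<and> PushP A B g \<in> P \<or>
    (\<exists>w0. z = w0 @ g # s \<and> child P (A, w0) (B, w))"
  using assms
proof cases
  case (branch_left C)
  then show ?thesis using child.branch_left[of A B C P w] by auto
next
  case (branch_right C)
  then show ?thesis using child.branch_right[of A C B P w] by auto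
next
  case (push f)
  then show ?thesis
  proof (cases w)
    case Nil
    then show ?thesis using push by simp
  next
    case (Cons f' w')
    then show ?thesis using push child.push[of A B f P w'] by auto
  qed
next
  case (pop f)
  then show ?thesis using child.pop[of A f B P w] by fastforce
qed

lemma rtranclp_child_pushed:
  assumes "(child P)\<^sup>*\<^sup>* (A0, []) (B, w @ g # s)"
  shows "\<exists>A' B'. (child P)\<^sup>*\<^sup>* (A0, []) (A', s) \<and> PushP A' B' g \<in> P \<and>
    (child P)\<^sup>*\<^sup>* (B', []) (B, w)"
  using assms
proof (induction "(B, w @ g # s)" arbitrary: B w rule: rtranclp_induct)
  case (step q)
  obtain A z where q: "q = (A, z)" by fastforce
  from child_onto_stack[of P A z B w g s] step.hyps(2) q
  consider "w = []" "z = s" "PushP A B g \<in> P"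
    | w0 where "z = w0 @ g # s" "child P (A, w0) (B, w)"
    by blast
  then show ?case
  proof cases
    case 1
    then show ?thesis using step.hyps(1) q by blast
  next
    case 2
    then show ?thesis using step.hyps(3)[of A w0] q by (meson rtranclp.rtrancl_into_rtrancl)
  qed
qed simp

lemma ann_PushP_iff:
  "PushP a b (f, Z) \<in> ann P \<longleftrightarrow>
     (\<exists>A B. a = (A, Z) \<and> b = (B, dot P [f] Z) \<and>
        PushP A B f \<in> P \<and> A \<in> Z \<and> B \<in> dot P [f] Z)"
  unfolding ann_def by auto

lemma RX_iff_descendant:
  "RX P X A B \<longleftrightarrow> A \<in> X \<and> B \<in> X \<and> (child (ann P))\<^sup>*\<^sup>* ((A, X), []) ((B, X), [])"
  unfolding RX_def derives_term_iff_descendant by (rule refl)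

lemma ann_stack_snoc: "ann_stack P (z @ [f]) X = ann_stack P z (dot P [f] X) @ [(f, X)]"
  by (simp add: ann_stack_def)

lemma ann_stack_Cons:
  "ann_stack P (f # z) X = (f, foldr (\<lambda>g. dot P [g]) z X) # ann_stack P z X"
proof (induction z arbitrary: X rule: rev_induct)
  case Nil
  then show ?case by (simp add: ann_stack_def)
next
  case (snoc g z)
  then show ?case using ann_stack_snoc[of P "f # z" g X] by (simp add: ann_stack_snoc)
qed

lemma ann_stack_eq_Nil_iff: "ann_stack P z X = [] \<longleftrightarrow> z = []"
  by (cases z) (simp add: ann_stack_def, simp add: ann_stack_Cons)

lemma phi_Nil: "phi P \<alpha> \<beta> [] = One"
  by (simp add: phi_def)

lemma phi_Cons: "phi P \<alpha> \<beta> (a # w) = mmult P (phi_letter P \<alpha> \<beta> a) (phi P \<alpha> \<beta> w)"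
  by (simp add: phi_def)

lemma mmult_phi_letter_eq_Elem:
  "mmult P (phi_letter P \<alpha> \<beta> (f, Z)) e = Elem B Y M A X \<longleftrightarrow>
     B = \<beta> f \<and> Y = dot P [f] Z \<and>
     (e = One \<and> M = Mfx P f Z \<and> A = \<alpha> f \<and> X = Z \<or>
      (\<exists>B1 M1. e = Elem B1 Z M1 A X \<and> RX P Z B1 (\<alpha> f) \<and> M = bmult M1 (Mfx P f Z)))"
  by (cases e) (auto simp: phi_letter_def)

lemma phi_eq_One_iff: "phi P \<alpha> \<beta> w = One \<longleftrightarrow> w = []"
proof (cases w)
  case (Cons a w')
  then show ?thesis
    by (cases a; cases "phi P \<alpha> \<beta> w'") (simp_all add: phi_Cons phi_letter_def)
qed (simp add: phi_Nil)

lemma phi_ann_stack_Cons_eq_Elem: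
  assumes "phi P \<alpha> \<beta> (ann_stack P (f # z) X) = Elem B Y M A X'"
  defines "Z \<equiv> foldr (\<lambda>g. dot P [g]) z X"
  shows "B = \<beta> f \<and> Y = dot P [f] Z \<and>
    (z = [] \<and> A = \<alpha> f \<and> X' = X \<or>
     (\<exists>B1 M1. phi P \<alpha> \<beta> (ann_stack P z X) = Elem B1 Z M1 A X' \<and> RX P Z B1 (\<alpha> f)))"
proof -
  from assms(1) have
    "mmult P (phi_letter P \<alpha> \<beta> (f, Z)) (phi P \<alpha> \<beta> (ann_stack P z X)) = Elem B Y M A X'"
    by (simp add: ann_stack_Cons phi_Cons Z_def)
  then show ?thesis
    unfolding mmult_phi_letter_eq_Elem by (auto simp: phi_eq_One_iff ann_stack_eq_Nil_iff Z_def)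
qed

lemma phi_ann_stack_eq_Elem:
  assumes "phi P \<alpha> \<beta> (ann_stack P z X) = Elem B Y M A X'"
  shows "z \<noteq> [] \<and> X' = X \<and> Y = foldr (\<lambda>g. dot P [g]) z X \<and> B = \<beta> (hd z) \<and> A = \<alpha> (last z)"
  using assms
proof (induction z arbitrary: B Y M A)
  case Nil
  then show ?case by (simp add: ann_stack_def phi_Nil)
next
  case (Cons f z)
  from phi_ann_stack_Cons_eq_Elem[OF Cons.prems] show ?case using Cons.IH by auto
qed

lemma phi_ann_stack_descendant:
  assumes pushes: "\<forall>f. PushP (\<alpha> f) (\<beta> f) f \<in> P"
    and "phi P \<alpha> \<beta> (ann_stack P z X) = Elem B Y M A X" and "A \<in> X" and "B \<in> Y"
  shows "(child (ann P))\<^sup>*\<^sup>* ((A, X), []) ((B, Y), ann_stack P z X)"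
  using assms(2-)
proof (induction z arbitrary: B Y M A)
  case Nil
  then show ?case by (simp add: ann_stack_def phi_Nil)
next
  case (Cons f z)
  define Z where "Z = foldr (\<lambda>g. dot P [g]) z X"
  from phi_ann_stack_Cons_eq_Elem[OF Cons.prems(1)]
  have B: "B = \<beta> f" and Y: "Y = dot P [f] Z" and
    cases: "z = [] \<and> A = \<alpha> f \<or>
      (\<exists>B1 M1. phi P \<alpha> \<beta> (ann_stack P z X) = Elem B1 Z M1 A X \<and> RX P Z B1 (\<alpha> f))"
    unfolding Z_def by auto
  have push: "child (ann P) ((\<alpha> f, Z), ann_stack P z X) ((B, Y), ann_stack P (f # z) X)"
    if "\<alpha> f \<in> Z"
    using that pushes Cons.prems(3) child.push[of "(\<alpha> f, Z)" "(B, Y)" "(f, Z)" "ann P"]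
    by (simp add: ann_PushP_iff ann_stack_Cons B Y Z_def)
  from cases show ?case
  proof
    assume "z = [] \<and> A = \<alpha> f"
    then show ?thesis using push Cons.prems(2) by (simp add: ann_stack_def Z_def)
  next
    assume "\<exists>B1 M1. phi P \<alpha> \<beta> (ann_stack P z X) = Elem B1 Z M1 A X \<and> RX P Z B1 (\<alpha> f)"
    then obtain B1 M1 where phi_z: "phi P \<alpha> \<beta> (ann_stack P z X) = Elem B1 Z M1 A X"
      and "RX P Z B1 (\<alpha> f)" by blast
    then have "B1 \<in> Z" "\<alpha> f \<in> Z" and "(child (ann P))\<^sup>*\<^sup>* ((B1, Z), []) ((\<alpha> f, Z), [])"
      by (simp_all add: RX_iff_descendant)
    with rtranclp_child_append_stack[where s = "ann_stack P z X"]
    have "(child (ann P))\<^sup>*\<^sup>* ((B1, Z), ann_stack P z X) ((\<alpha> f, Z), ann_stack P z X)"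
      by fastforce
    moreover have "(child (ann P))\<^sup>*\<^sup>* ((A, X), []) ((B1, Z), ann_stack P z X)"
      using Cons.IH[OF phi_z Cons.prems(2) \<open>B1 \<in> Z\<close>] .
    ultimately show ?thesis
      using push \<open>\<alpha> f \<in> Z\<close> by (meson rtranclp.rtrancl_into_rtrancl rtranclp_trans)
  qed
qed

lemma descendant_ann_stack_bottom:
  assumes "(child (ann P))\<^sup>*\<^sup>* ((C, X), []) (q, ann_stack P (z @ [g]) X)"
  obtains a b where "PushP a b g \<in> P" and "a \<in> X"
    and "(child (ann P))\<^sup>*\<^sup>* ((C, X), []) ((a, X), [])"
proof -
  from assms have
    "(child (ann P))\<^sup>*\<^sup>* ((C, X), []) (q, ann_stack P z (dot P [g] X) @ [(g, X)])"
    by (simp add: ann_stack_snoc)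
  from rtranclp_child_pushed[OF this] obtain A' B'
    where "(child (ann P))\<^sup>*\<^sup>* ((C, X), []) (A', [])" "PushP A' B' (g, X) \<in> ann P"
    by blast
  then show ?thesis using that by (auto simp: ann_PushP_iff)
qed

lemma descendant_ann_stack_top:
  assumes "(child (ann P))\<^sup>*\<^sup>* (p, []) ((D, Y), ann_stack P (f # z) X)"
  defines "Z \<equiv> dot P [f] (foldr (\<lambda>g. dot P [g]) z X)"
  obtains a b where "PushP a b f \<in> P" and "b \<in> Z"
    and "(child (ann P))\<^sup>*\<^sup>* ((b, Z), []) ((D, Y), [])"
proof -
  from assms(1) have "(child (ann P))\<^sup>*\<^sup>* (p, [])
      ((D, Y), [] @ (f, foldr (\<lambda>g. dot P [g]) z X) # ann_stack P z X)"
    by (simp add: ann_stack_Cons)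
  from rtranclp_child_pushed[OF this] obtain A' B'
    where "PushP A' B' (f, foldr (\<lambda>g. dot P [g]) z X) \<in> ann P"
      "(child (ann P))\<^sup>*\<^sup>* (B', []) ((D, Y), [])"
    by blast
  then show ?thesis using that by (auto simp: ann_PushP_iff Z_def)
qed

lemma phi_ann_stack_RX_imp_descendant:
  assumes "\<forall>f. PushP (\<alpha> f) (\<beta> f) f \<in> P"
    and "phi P \<alpha> \<beta> (ann_stack P z X) = Elem B Y M A X"
    and "RX P X C A" and "RX P Y B D"
  shows "(child (ann P))\<^sup>*\<^sup>* ((C, X), []) ((D, Y), ann_stack P z X)"
proof -
  from assms(3,4) have "A \<in> X" "B \<in> Y"
    and "(child (ann P))\<^sup>*\<^sup>* ((C, X), []) ((A, X), [])"
    and "(child (ann P))\<^sup>*\<^sup>* ((B, Y), ann_stack P z X) ((D, Y), ann_stack P z X)"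
    using rtranclp_child_append_stack[of "ann P" "(B, Y)" "[]" "(D, Y)" "[]"]
    by (auto simp: RX_iff_descendant)
  with phi_ann_stack_descendant[OF assms(1,2)] show ?thesis
    by (meson rtranclp_trans)
qed

lemma descendant_ann_stack_imp_RX:
  assumes unique_pushes: "\<forall>A' B' f. PushP A' B' f \<in> P \<longrightarrow> A' = \<alpha> f \<and> B' = \<beta> f"
    and "z \<noteq> []" and "C \<in> X" and "D \<in> Y" and Y: "Y = foldr (\<lambda>g. dot P [g]) z X"
    and path: "(child (ann P))\<^sup>*\<^sup>* ((C, X), []) ((D, Y), ann_stack P z X)"
  shows "RX P X C (\<alpha> (last z)) \<and> RX P Y (\<beta> (hd z)) D"
proof
  obtain z' g where z: "z = z' @ [g]" using \<open>z \<noteq> []\<close> rev_exhaust by blast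
  from path obtain a b where "PushP a b g \<in> P" "a \<in> X"
    and "(child (ann P))\<^sup>*\<^sup>* ((C, X), []) ((a, X), [])"
    unfolding z by (rule descendant_ann_stack_bottom)
  then show "RX P X C (\<alpha> (last z))"
    using unique_pushes \<open>C \<in> X\<close> by (auto simp: z RX_iff_descendant)
next
  obtain f z' where z: "z = f # z'" using \<open>z \<noteq> []\<close> list.exhaust by blast
  from path obtain a b where "PushP a b f \<in> P" "b \<in> Y"
    and "(child (ann P))\<^sup>*\<^sup>* ((b, Y), []) ((D, Y), [])"
    unfolding z Y by (rule descendant_ann_stack_top) (simp_all add: z)
  then show "RX P Y (\<beta> (hd z)) D"
    using unique_pushes \<open>D \<in> Y\<close> by (auto simp: z RX_iff_descendant)
qed

theorem lemma5p2:
  fixes P :: "('n::finite, 't::finite, 'i::finite) prod set"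
    and S :: 'n and \<alpha> \<beta> :: "'i \<Rightarrow> 'n"
    and z :: "'i list" and X Y :: "'n set" and A B :: 'n and M :: "'n \<Rightarrow> 'n \<Rightarrow> bool"
  assumes "finite P"
    and "S \<in> Useful P"
    and "\<forall>f. \<exists>A' B'. PushP A' B' f \<in> P"
    and "\<forall>A' B' f. PushP A' B' f \<in> P \<longrightarrow> A' = \<alpha> f \<and> B' = \<beta> f"
    and "z \<noteq> []"
    and "phi P \<alpha> \<beta> (ann_stack P z X) = Elem B Y M A X"
  shows "\<forall>C\<in>X. \<forall>D\<in>Y. (RX P X C A \<and> RX P Y B D) \<longleftrightarrow>
           (\<exists>u v. derives (ann P) [Nt (C, X) []] (u @ [Nt (D, Y) (ann_stack P z X)] @ v))"
proof (intro ballI)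
  fix C D assume "C \<in> X" "D \<in> Y"
  have pushes: "\<forall>f. PushP (\<alpha> f) (\<beta> f) f \<in> P" using assms(3,4) by metis
  from phi_ann_stack_eq_Elem[OF assms(6)]
  have Y: "Y = foldr (\<lambda>g. dot P [g]) z X" and "A = \<alpha> (last z)" "B = \<beta> (hd z)" by auto
  then have "(RX P X C A \<and> RX P Y B D) \<longleftrightarrow>
      (child (ann P))\<^sup>*\<^sup>* ((C, X), []) ((D, Y), ann_stack P z X)"
    using phi_ann_stack_RX_imp_descendant[OF pushes assms(6)]
      descendant_ann_stack_imp_RX[OF assms(4,5) \<open>C \<in> X\<close> \<open>D \<in> Y\<close> Y] by blast
  then show "(RX P X C A \<and> RX P Y B D) \<longleftrightarrow>
      (\<exists>u v. derives (ann P) [Nt (C, X) []] (u @ [Nt (D, Y) (ann_stack P z X)] @ v))"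
    by (simp only: derives_term_iff_descendant)
qed

end
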